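(* Let $A$ be a $t\times T$ binary matrix of rank $t$ over $\mathbb F_2$, and let $v\in\mathbb F_2^T$ be a minimal nonzero vector of the row space of $A$ (i.e. no nonzero vector in the row space has support strictly contained in the support of $v$). Let $B$ be the $t\times|v|$ matrix obtained from $A$ by deleting all columns whose index is not in the support of $v$ (here $|v|$ is the size of the support), and let $A'$ be the $(t+1)\times2|v|$ matrix $$A'=\left[\begin{array}{c|c} B & B\\ 1\cdots1 & 0\cdots0\end{array}\right].$$ Then for every $f:\{0,1\}^n\to\{-1,1\}$, $\mathbb E_A(f)\le\sqrt{\mathbb E_{A'}(f)}$ (in particular $\mathbb E_{A'}(f)\ge0$).
   Context: $\{0,1\}^n$ is identified with $\mathbb F_2^n$. For a $t\times T$ binary matrix $A=(A_{ij})$, $\mathbb E_A(f)=\mathbb E_{y_1,\dots,y_t}\prod_{j=1}^T f\big(\sum_{i=1}^tA_{ij}y_i\big)$, with $y_1,\dots,y_t$ independent uniform in $\{0,1\}^n$. *)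

theory Defs
  imports Complex_Main "HOL-Library.Z2" "HOL-Library.FuncSet"
begin

text \<open>A t x T binary matrix is a function
  A :: nat => nat => bit, of which only the entries A i j with i < t, j < T matter.
  Vectors of F_2^m are functions nat => bit vanishing at indices >= m.\<close>

definition cube :: "nat \<Rightarrow> (nat \<Rightarrow> bit) set" where
  "cube n = {x. \<forall>l\<ge>n. x l = 0}"

definition full_row_rank :: "nat \<Rightarrow> nat \<Rightarrow> (nat \<Rightarrow> nat \<Rightarrow> bit) \<Rightarrow> bool" where
  "full_row_rank t T A \<longleftrightarrow>
     (\<forall>c :: nat \<Rightarrow> bit. (\<forall>j<T. (\<Sum>i<t. c i * A i j) = 0) \<longrightarrow> (\<forall>i<t. c i = 0))"

definition row_space :: "nat \<Rightarrow> nat \<Rightarrow> (nat \<Rightarrow> nat \<Rightarrow> bit) \<Rightarrow> (nat \<Rightarrow> bit) set" where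
  "row_space t T A = {w. \<exists>c :: nat \<Rightarrow> bit. \<forall>j. w j = (if j < T then (\<Sum>i<t. c i * A i j) else 0)}"

definition supp :: "(nat \<Rightarrow> bit) \<Rightarrow> nat set" where
  "supp v = {j. v j \<noteq> 0}"

definition minimal_in_row_space :: "nat \<Rightarrow> nat \<Rightarrow> (nat \<Rightarrow> nat \<Rightarrow> bit) \<Rightarrow> (nat \<Rightarrow> bit) \<Rightarrow> bool" where
  "minimal_in_row_space t T A v \<longleftrightarrow>
     v \<in> row_space t T A \<and> supp v \<noteq> {} \<and>
     (\<forall>w \<in> row_space t T A. supp w \<noteq> {} \<longrightarrow> \<not> (supp w \<subset> supp v))"

definition restrict_cols :: "(nat \<Rightarrow> nat \<Rightarrow> bit) \<Rightarrow> nat set \<Rightarrow> nat \<Rightarrow> nat \<Rightarrow> bit" where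
  "restrict_cols A S i j = A i (sorted_list_of_set S ! j)"

definition doubled :: "nat \<Rightarrow> nat \<Rightarrow> (nat \<Rightarrow> nat \<Rightarrow> bit) \<Rightarrow> nat \<Rightarrow> nat \<Rightarrow> bit" where
  "doubled t k B i j =
     (if i < t then (if j < k then B i j else B i (j - k))
      else (if j < k then 1 else 0))"

definition E_mat :: "nat \<Rightarrow> nat \<Rightarrow> nat \<Rightarrow> (nat \<Rightarrow> nat \<Rightarrow> bit) \<Rightarrow> ((nat \<Rightarrow> bit) \<Rightarrow> real) \<Rightarrow> real" where
  "E_mat n t T A f =
     (\<Sum>y \<in> PiE {..<t} (\<lambda>_. cube n). \<Prod>j<T. f (\<lambda>l. \<Sum>i<t. A i j * y i l)) / 2 ^ (n * t)"

end

theory Submission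
  imports Defs "HOL-Library.Function_Algebras" "HOL-Analysis.Convex"
begin

text \<open>Write \<open>v = c A\<close> and let \<open>x\<^sub>j(y) = \<Sum>\<^sub>i A\<^sub>i\<^sub>j y\<^sub>i\<close> be the argument of the \<open>j\<close>-th factor.
  The substitution \<open>y\<^sub>i \<mapsto> y\<^sub>i + c\<^sub>i z\<close> preserves the uniform distribution of
  \<open>(y\<^sub>1, \<dots>, y\<^sub>t)\<close> and adds \<open>z\<close> to exactly the \<open>x\<^sub>j\<close> with \<open>j \<in> supp v\<close>; averaging over \<open>z\<close> gives
  \<open>E\<^sub>A(f) = E\<^sub>y P(y) H(y)\<close>, where \<open>P\<close> is the product of the factors outside \<open>supp v\<close> and
  \<open>H(y) = E\<^sub>z \<Prod>\<^bsub>j \<in> supp v\<^esub> f(x\<^sub>j(y) + z)\<close>. As \<open>P(y) = \<plusminus>1\<close>, Cauchy-Schwarz yields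
  \<open>E\<^sub>A(f)\<^sup>2 \<le> E\<^sub>y H(y)\<^sup>2\<close>. Expanding the square and substituting \<open>y\<^sub>i \<mapsto> y\<^sub>i + c\<^sub>i z\<close> once more turns
  \<open>E\<^sub>y H(y)\<^sup>2\<close> into \<open>E\<^sub>y\<^sub>,\<^sub>w \<Prod>\<^bsub>j \<in> supp v\<^esub> f(x\<^sub>j(y) + w) f(x\<^sub>j(y))\<close>, which is \<open>E\<^sub>A\<^sub>'(f)\<close>.\<close>

declare add_bit_eq_xor [simp del] mult_bit_eq_and [simp del]

lemma UNIV_bit: "(UNIV :: bit set) = {0, 1}"
  by (auto intro: bit.exhaust)

lemma bit_add_self [simp]: "(a::bit) + a = 0"
  by (cases a) (simp_all add: add_bit_eq_xor)

lemma vec_add_self [simp]: "(x :: 'a \<Rightarrow> bit) + x = 0"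
  by (simp add: fun_eq_iff)

lemma cube_not_empty: "cube n \<noteq> {}"
  by (auto simp: cube_def)

lemma add_in_cube: "a \<in> cube n \<Longrightarrow> b \<in> cube n \<Longrightarrow> a + b \<in> cube n"
  by (simp add: cube_def)

lemma bij_betw_restrict_cube: "bij_betw (\<lambda>x. restrict x {..<n}) (cube n) (PiE {..<n} (\<lambda>_. UNIV))"
  by (rule bij_betw_byWitness[where f' = "\<lambda>g l. if l < n then g l else 0"])
     (auto simp: cube_def PiE_def extensional_def fun_eq_iff)

lemma finite_cube: "finite (cube n)"
  using bij_betw_finite[OF bij_betw_restrict_cube] by (simp add: finite_PiE UNIV_bit)

lemma card_cube: "card (cube n) = 2 ^ n"
  using bij_betw_same_card[OF bij_betw_restrict_cube]
  by (simp add: card_PiE UNIV_bit numeral_2_eq_2)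

definition cube_tuples :: "nat \<Rightarrow> nat \<Rightarrow> (nat \<Rightarrow> nat \<Rightarrow> bit) set" where
  "cube_tuples n t = PiE {..<t} (\<lambda>_. cube n)"

lemma card_cube_tuples: "card (cube_tuples n t) = 2 ^ (n * t)"
  by (simp add: cube_tuples_def card_PiE card_cube power_mult)

lemma sum_cube_tuples_Suc:
  "(\<Sum>y\<in>cube_tuples n (Suc t). G y) = (\<Sum>y\<in>cube_tuples n t. \<Sum>w\<in>cube n. G (y(t := w)))"
proof -
  have img: "cube_tuples n (Suc t) = (\<lambda>(w, y). y(t := w)) ` (cube n \<times> cube_tuples n t)"
    by (simp add: cube_tuples_def lessThan_Suc PiE_insert_eq)
  have inj: "inj_on (\<lambda>(w, y). y(t := w)) (cube n \<times> cube_tuples n t)"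
    unfolding cube_tuples_def by (rule inj_combinator) simp
  show ?thesis
    unfolding img sum.reindex[OF inj]
    by (subst sum.swap) (simp add: sum.cartesian_product case_prod_unfold)
qed

definition avg :: "'a set \<Rightarrow> ('a \<Rightarrow> real) \<Rightarrow> real" where
  "avg X F = sum F X / card X"

lemma avg_cong: "(\<And>x. x \<in> X \<Longrightarrow> F x = G x) \<Longrightarrow> avg X F = avg X G"
  by (simp add: avg_def)

lemma avg_const: "finite X \<Longrightarrow> X \<noteq> {} \<Longrightarrow> avg X (\<lambda>_. c) = c"
  by (simp add: avg_def)

lemma avg_mult_left: "avg X (\<lambda>x. c * F x) = c * avg X F"
  by (simp add: avg_def sum_distrib_left)

lemma avg_mult_right: "avg X (\<lambda>x. F x * c) = avg X F * c"
  by (simp add: avg_def sum_distrib_right)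

lemma avg_swap: "avg X (\<lambda>x. avg Y (F x)) = avg Y (\<lambda>y. avg X (\<lambda>x. F x y))"
  unfolding avg_def sum_divide_distrib[symmetric] by (subst sum.swap) simp

lemma avg_nonneg: "(\<And>x. x \<in> X \<Longrightarrow> 0 \<le> F x) \<Longrightarrow> 0 \<le> avg X F"
  by (simp add: avg_def sum_nonneg)

lemma avg_square_le: "(avg X F)\<^sup>2 \<le> avg X (\<lambda>x. (F x)\<^sup>2)"
proof (cases "card X = 0")
  case False
  then have "(sum F X)\<^sup>2 / (card X)\<^sup>2 \<le> (\<Sum>x\<in>X. (F x)\<^sup>2) * card X / (card X)\<^sup>2"
    by (intro divide_right_mono sum_squared_le_sum_of_squares) simp
  then show ?thesis
    using False by (simp add: avg_def power_divide power2_eq_square)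
qed (simp add: avg_def)

lemma avg_involution:
  assumes "\<And>x. x \<in> X \<Longrightarrow> h x \<in> X" and "\<And>x. x \<in> X \<Longrightarrow> h (h x) = x"
  shows "avg X (\<lambda>x. F (h x)) = avg X F"
  unfolding avg_def
  by (rule arg_cong[where f = "\<lambda>s. s / _"], rule sum.reindex_bij_witness[of _ h h])
     (simp_all add: assms)

lemma avg_cube_translate: "z \<in> cube n \<Longrightarrow> avg (cube n) (\<lambda>w. F (z + w)) = avg (cube n) F"
  by (rule avg_involution[where h = "(+) z"]) (simp_all add: add_in_cube flip: add.assoc)

lemma avg_cube_tuples_Suc:
  "avg (cube_tuples n (Suc t)) G = avg (cube_tuples n t) (\<lambda>y. avg (cube n) (\<lambda>w. G (y(t := w))))"
  by (simp add: avg_def sum_cube_tuples_Suc card_cube_tuples card_cube sum_divide_distrib[symmetric]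
      power_add)

lemma prod_lessThan_double: "(\<Prod>j<2 * (k::nat). g j) = (\<Prod>j<k. g j) * (\<Prod>j<k. g (j + k))"
proof -
  have "(\<Prod>j<2 * k. g j) = prod g {0..<k} * prod g {k..<k + k}"
    by (simp add: mult_2 atLeast0LessThan[symmetric] prod.atLeastLessThan_concat)
  also have "prod g {k..<k + k} = (\<Prod>j<k. g (j + k))"
    using prod.shift_bounds_nat_ivl[of g 0 k k] by (simp add: atLeast0LessThan)
  finally show ?thesis
    by (simp add: atLeast0LessThan)
qed

definition col_comb ::
    "nat \<Rightarrow> (nat \<Rightarrow> nat \<Rightarrow> bit) \<Rightarrow> (nat \<Rightarrow> nat \<Rightarrow> bit) \<Rightarrow> nat \<Rightarrow> nat \<Rightarrow> bit" where
  "col_comb t A y j = (\<lambda>l. \<Sum>i<t. A i j * y i l)"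

lemma col_comb_in_cube: "y \<in> cube_tuples n t \<Longrightarrow> col_comb t A y j \<in> cube n"
  by (auto simp: col_comb_def cube_tuples_def cube_def PiE_iff)

lemma E_mat_eq_avg: "E_mat n t T A f = avg (cube_tuples n t) (\<lambda>y. \<Prod>j<T. f (col_comb t A y j))"
  unfolding E_mat_def avg_def card_cube_tuples by (simp add: col_comb_def cube_tuples_def)

definition shift_tuple ::
    "nat \<Rightarrow> (nat \<Rightarrow> bit) \<Rightarrow> (nat \<Rightarrow> bit) \<Rightarrow> (nat \<Rightarrow> nat \<Rightarrow> bit) \<Rightarrow> nat \<Rightarrow> nat \<Rightarrow> bit" where
  "shift_tuple t c z y = (\<lambda>i\<in>{..<t}. y i + (\<lambda>l. c i * z l))"

lemma avg_cube_tuples_shift: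
  assumes "z \<in> cube n"
  shows "avg (cube_tuples n t) (\<lambda>y. F (shift_tuple t c z y)) = avg (cube_tuples n t) F"
proof (rule avg_involution[where h = "shift_tuple t c z"])
  fix y assume y: "y \<in> cube_tuples n t"
  then show "shift_tuple t c z y \<in> cube_tuples n t"
    using assms by (auto simp: shift_tuple_def cube_tuples_def cube_def PiE_iff)
  show "shift_tuple t c z (shift_tuple t c z y) = y"
    using y
    by (auto simp: shift_tuple_def cube_tuples_def PiE_iff extensional_def fun_eq_iff add.assoc)
qed

lemma col_comb_shift_tuple:
  "col_comb t A (shift_tuple t c z y) j = col_comb t A y j + (\<lambda>l. (\<Sum>i<t. c i * A i j) * z l)"
  by (simp add: col_comb_def shift_tuple_def fun_eq_iff distrib_left sum.distrib sum_distrib_left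
      mult_ac)

lemma col_comb_doubled:
  "col_comb (Suc t) (doubled t k B) (y(t := w)) j =
     (if j < k then col_comb t B y j + w else col_comb t B y (j - k))"
  by (simp add: col_comb_def doubled_def fun_eq_iff)

lemma col_comb_restrict_cols:
  "col_comb t (restrict_cols A S) y j = col_comb t A y (sorted_list_of_set S ! j)"
  by (simp add: col_comb_def restrict_cols_def)

lemma E_mat_eq_avg_translate:
  assumes "S \<subseteq> {..<T}"
    and on_S: "\<And>j. j \<in> S \<Longrightarrow> (\<Sum>i<t. c i * A i j) = 1"
    and off_S: "\<And>j. j < T \<Longrightarrow> j \<notin> S \<Longrightarrow> (\<Sum>i<t. c i * A i j) = 0"
  shows "E_mat n t T A f = avg (cube_tuples n t) (\<lambda>y.
           (\<Prod>j\<in>{..<T} - S. f (col_comb t A y j)) *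
           avg (cube n) (\<lambda>z. \<Prod>j\<in>S. f (col_comb t A y j + z)))"
proof -
  let ?P = "\<lambda>y. \<Prod>j\<in>{..<T} - S. f (col_comb t A y j)"
  let ?Q = "\<lambda>y z. \<Prod>j\<in>S. f (col_comb t A y j + z)"
  have translated: "E_mat n t T A f = avg (cube_tuples n t) (\<lambda>y. ?P y * ?Q y z)"
    if "z \<in> cube n" for z
  proof -
    have "E_mat n t T A f =
        avg (cube_tuples n t) (\<lambda>y. \<Prod>j<T. f (col_comb t A (shift_tuple t c z y) j))"
      unfolding E_mat_eq_avg
      by (rule avg_cube_tuples_shift[symmetric, where F = "\<lambda>y. \<Prod>j<T. f (col_comb t A y j)"]) fact
    also have "\<dots> = avg (cube_tuples n t) (\<lambda>y. ?P y * ?Q y z)"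
    proof (rule avg_cong)
      fix y
      have "(\<Prod>j<T. f (col_comb t A (shift_tuple t c z y) j)) =
          (\<Prod>j\<in>{..<T} - S. f (col_comb t A (shift_tuple t c z y) j)) *
          (\<Prod>j\<in>S. f (col_comb t A (shift_tuple t c z y) j))"
        using prod.subset_diff[OF \<open>S \<subseteq> {..<T}\<close>] by simp
      also have "(\<Prod>j\<in>{..<T} - S. f (col_comb t A (shift_tuple t c z y) j)) = ?P y"
        by (rule prod.cong) (simp_all add: col_comb_shift_tuple off_S flip: zero_fun_def)
      also have "(\<Prod>j\<in>S. f (col_comb t A (shift_tuple t c z y) j)) = ?Q y z"
        by (rule prod.cong) (simp_all add: col_comb_shift_tuple on_S)
      finally show "(\<Prod>j<T. f (col_comb t A (shift_tuple t c z y) j)) = ?P y * ?Q y z" .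
    qed
    finally show ?thesis .
  qed
  have "E_mat n t T A f = avg (cube n) (\<lambda>z. avg (cube_tuples n t) (\<lambda>y. ?P y * ?Q y z))"
  proof -
    have "E_mat n t T A f = avg (cube n) (\<lambda>z. E_mat n t T A f)"
      by (simp add: avg_const finite_cube cube_not_empty)
    also have "\<dots> = avg (cube n) (\<lambda>z. avg (cube_tuples n t) (\<lambda>y. ?P y * ?Q y z))"
      by (rule avg_cong) (rule translated)
    finally show ?thesis .
  qed
  also have "\<dots> = avg (cube_tuples n t) (\<lambda>y. ?P y * avg (cube n) (?Q y))"
    by (simp add: avg_swap[of "cube n"] avg_mult_left)
  finally show ?thesis .
qed

lemma avg_square_avg_translate:
  assumes on_S: "\<And>j. j \<in> S \<Longrightarrow> (\<Sum>i<t. c i * A i j) = 1"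
  shows "avg (cube_tuples n t) (\<lambda>y. (avg (cube n) (\<lambda>z. \<Prod>j\<in>S. f (col_comb t A y j + z)))\<^sup>2) =
         avg (cube_tuples n t) (\<lambda>y.
           avg (cube n) (\<lambda>w. \<Prod>j\<in>S. f (col_comb t A y j + w) * f (col_comb t A y j)))"
    (is "avg ?Y (\<lambda>y. (avg ?C (?Q y))\<^sup>2) = avg ?Y (\<lambda>y. avg ?C (?R y))")
proof -
  have shifted: "avg ?Y (\<lambda>y. ?Q y z * ?Q y z') = avg ?Y (\<lambda>y. ?R y (z + z'))" if "z \<in> ?C" for z z'
  proof -
    have "?Q (shift_tuple t c z y) z'' = (\<Prod>j\<in>S. f (col_comb t A y j + (z + z'')))" for y z''
      by (rule prod.cong) (simp_all add: col_comb_shift_tuple on_S add.assoc)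
    then have "?Q (shift_tuple t c z y) z * ?Q (shift_tuple t c z y) z' = ?R y (z + z')" for y
      by (simp add: prod.distrib mult.commute)
    moreover have "avg ?Y (\<lambda>y. ?Q y z * ?Q y z') =
        avg ?Y (\<lambda>y. ?Q (shift_tuple t c z y) z * ?Q (shift_tuple t c z y) z')"
      by (rule avg_cube_tuples_shift[OF that, symmetric])
    ultimately show ?thesis
      by simp
  qed
  have "avg ?Y (\<lambda>y. (avg ?C (?Q y))\<^sup>2) = avg ?Y (\<lambda>y. avg ?C (\<lambda>z. avg ?C (\<lambda>z'. ?Q y z * ?Q y z')))"
    by (simp add: power2_eq_square avg_mult_left avg_mult_right)
  also have "\<dots> = avg ?C (\<lambda>z. avg ?C (\<lambda>z'. avg ?Y (\<lambda>y. ?Q y z * ?Q y z')))"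
    by (simp add: avg_swap[of ?Y])
  also have "\<dots> = avg ?C (\<lambda>z. avg ?C (\<lambda>z'. avg ?Y (\<lambda>y. ?R y (z + z'))))"
    by (intro avg_cong shifted)
  also have "\<dots> = avg ?C (\<lambda>z. avg ?C (\<lambda>w. avg ?Y (\<lambda>y. ?R y w)))"
    by (intro avg_cong avg_cube_translate)
  also have "\<dots> = avg ?Y (\<lambda>y. avg ?C (?R y))"
    by (simp add: avg_const finite_cube cube_not_empty avg_swap[of ?C])
  finally show ?thesis .
qed

lemma E_mat_doubled_restrict_cols:
  assumes "finite S"
  shows "E_mat n (t + 1) (2 * card S) (doubled t (card S) (restrict_cols A S)) f =
         avg (cube_tuples n t) (\<lambda>y.
           avg (cube n) (\<lambda>w. \<Prod>j\<in>S. f (col_comb t A y j + w) * f (col_comb t A y j)))"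
proof -
  let ?s = "sorted_list_of_set S"
  have bij: "bij_betw (nth ?s) {..<card S} S"
    by (rule bij_betw_nth) (simp_all add: assms)
  have "(\<Prod>j<2 * card S. f (col_comb (Suc t) (doubled t (card S) (restrict_cols A S)) (y(t := w)) j)) =
      (\<Prod>j\<in>S. f (col_comb t A y j + w) * f (col_comb t A y j))" for y w
  proof -
    have "(\<Prod>j<2 * card S. f (col_comb (Suc t) (doubled t (card S) (restrict_cols A S)) (y(t := w)) j)) =
        (\<Prod>j<card S. f (col_comb t A y (?s ! j) + w)) * (\<Prod>j<card S. f (col_comb t A y (?s ! j)))"
      by (simp add: prod_lessThan_double col_comb_doubled col_comb_restrict_cols)
    also have "\<dots> = (\<Prod>j\<in>S. f (col_comb t A y j + w)) * (\<Prod>j\<in>S. f (col_comb t A y j))"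
      using prod.reindex_bij_betw[OF bij, of "\<lambda>j. f (col_comb t A y j + w)"]
        prod.reindex_bij_betw[OF bij, of "\<lambda>j. f (col_comb t A y j)"] by simp
    finally show ?thesis
      by (simp add: prod.distrib)
  qed
  then show ?thesis
    by (simp add: E_mat_eq_avg avg_cube_tuples_Suc)
qed

lemma row_space_supp_coeffs:
  assumes "v \<in> row_space t T A"
  obtains c where "supp v \<subseteq> {..<T}"
    and "\<And>j. j \<in> supp v \<Longrightarrow> (\<Sum>i<t. c i * A i j) = 1"
    and "\<And>j. j < T \<Longrightarrow> j \<notin> supp v \<Longrightarrow> (\<Sum>i<t. c i * A i j) = 0"
proof -
  from assms obtain c where v: "\<And>j. v j = (if j < T then (\<Sum>i<t. c i * A i j) else 0)"
    unfolding row_space_def by blast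
  show ?thesis
    by (rule that[of c]) (auto simp: supp_def v split: if_splits)
qed

theorem proposition7p6:
  fixes n t T :: nat and A :: "nat \<Rightarrow> nat \<Rightarrow> bit" and v :: "nat \<Rightarrow> bit"
    and f :: "(nat \<Rightarrow> bit) \<Rightarrow> real"
  assumes "full_row_rank t T A"
    and "minimal_in_row_space t T A v"
    and "\<forall>x \<in> cube n. f x = 1 \<or> f x = -1"
  shows "0 \<le> E_mat n (t + 1) (2 * card (supp v)) (doubled t (card (supp v)) (restrict_cols A (supp v))) f
    \<and> E_mat n t T A f
        \<le> sqrt (E_mat n (t + 1) (2 * card (supp v)) (doubled t (card (supp v)) (restrict_cols A (supp v))) f)"
proof -
  obtain c where S: "supp v \<subseteq> {..<T}"
    and on_S: "\<And>j. j \<in> supp v \<Longrightarrow> (\<Sum>i<t. c i * A i j) = 1"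
    and off_S: "\<And>j. j < T \<Longrightarrow> j \<notin> supp v \<Longrightarrow> (\<Sum>i<t. c i * A i j) = 0"
    using assms(2) row_space_supp_coeffs unfolding minimal_in_row_space_def by blast
  define P where "P y = (\<Prod>j\<in>{..<T} - supp v. f (col_comb t A y j))" for y
  define H where "H y = avg (cube n) (\<lambda>z. \<Prod>j\<in>supp v. f (col_comb t A y j + z))" for y
  let ?EA' = "E_mat n (t + 1) (2 * card (supp v)) (doubled t (card (supp v)) (restrict_cols A (supp v))) f"
  have EA: "E_mat n t T A f = avg (cube_tuples n t) (\<lambda>y. P y * H y)"
    unfolding P_def H_def by (rule E_mat_eq_avg_translate[OF S on_S off_S])
  have "?EA' = avg (cube_tuples n t) (\<lambda>y.
      avg (cube n) (\<lambda>w. \<Prod>j\<in>supp v. f (col_comb t A y j + w) * f (col_comb t A y j)))"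
    by (rule E_mat_doubled_restrict_cols) (rule finite_subset[OF S finite_lessThan])
  also have "\<dots> = avg (cube_tuples n t) (\<lambda>y. (H y)\<^sup>2)"
    unfolding H_def by (rule avg_square_avg_translate[symmetric]) (rule on_S)
  finally have EA': "?EA' = avg (cube_tuples n t) (\<lambda>y. (H y)\<^sup>2)" .
  have f_square: "(f x)\<^sup>2 = 1" if "x \<in> cube n" for x
    using assms(3) that by auto
  have "(P y)\<^sup>2 = 1" if "y \<in> cube_tuples n t" for y
    unfolding P_def prod_power_distrib by (simp add: f_square col_comb_in_cube that)
  then have "(E_mat n t T A f)\<^sup>2 \<le> ?EA'"
    unfolding EA EA' using avg_square_le[of "cube_tuples n t" "\<lambda>y. P y * H y"]
    by (simp add: power_mult_distrib cong: avg_cong)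
  moreover have "0 \<le> ?EA'"
    unfolding EA' by (simp add: avg_nonneg)
  ultimately show ?thesis
    by (simp add: real_le_rsqrt)
qed

end
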